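(* Consider a generalized Nash equilibrium problem with $N$ players in which the $i$th player, given $x_{-i}$, solves $\min_{x_i\in\mathbb{R}^{n_i}} f_i(x_i,x_{-i})$ subject to $g_i(x_i,x_{-i})\ge 0$, where $f_i$ and the components of $g_i$ are real polynomials in $x=(x_1,\dots,x_N)\in\mathbb{R}^n$. Suppose that there exists a nonempty closed set $X\subseteq\mathbb{R}^n$ and closed sets $D_i\subseteq\mathbb{R}^{n_i}$ with $(D_1\times\cdots\times D_N)\cap X\neq\emptyset$ such that $X_i(x_{-i})=\{x_i\in D_i:(x_i,x_{-i})\in X\}$ for all players $i$ and all $x_{-i}$. For each $i$ let \[ K_i=\{(x_i,y_i,x_{-i})\in\mathbb{R}^{n_i}\times\mathbb{R}^{n_i}\times\mathbb{R}^{n-n_i}:\ x_i,y_i\in X_i(x_{-i}),\ f_i(y_i,x_{-i})-f_i(x_i,x_{-i})\ge 0\}, \] and write $\triangle P_i=P(y_i,x_{-i})-P(x_i,x_{-i})$, $\triangle f_i=f_i(y_i,x_{-i})-f_i(x_i,x_{-i})$. If there exist polynomials $P\in\mathbb{R}[x]$ and $p_{i,0},p_{i,1}\in\mathbb{R}[x_i,y_i,x_{-i}]$ ($i=1,\dots,N$) such that $p_{i,0}\ge 0$ and $p_{i,1}\ge 0$ on $K_i$ and \[ \triangle P_i=(p_{i,0}+1)\,\triangle f_i+p_{i,1} \] (as an identity) for all $i$, then the problem is a generalized potential game.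
   Context: Notation: $x_{-i}=(x_1,\dots,x_{i-1},x_{i+1},\dots,x_N)$, $(y_i,x_{-i})$ is the point whose $i$th block is $y_i$ and other blocks are $x_{-i}$, and $X_i(x_{-i})=\{x_i: g_i(x_i,x_{-i})\ge 0\}$ is player $i$'s feasible set. Definition: the problem is a generalized potential game (GPG) if (i) there is a nonempty closed set $X\subseteq\mathbb{R}^n$ and closed sets $D_i\subseteq\mathbb{R}^{n_i}$ with $(D_1\times\cdots\times D_N)\cap X\ne\emptyset$ such that $X_i(x_{-i})=\{x_i\in D_i:(x_i,x_{-i})\in X\}$ for all players; and (ii) there exist a continuous function $P:\mathbb{R}^n\to\mathbb{R}$ and a forcing function $\sigma:\mathbb{R}_+\to\mathbb{R}_+$ (i.e., $\lim_k\sigma(t_k)=0$ implies $\lim_k t_k=0$) such that for all $i$, all $x_{-i}$ and all $y_i,x_i\in X_i(x_{-i})$: if $f_i(y_i,x_{-i})-f_i(x_i,x_{-i})>0$ then $P(y_i,x_{-i})-P(x_i,x_{-i})\ge\sigma\big(f_i(y_i,x_{-i})-f_i(x_i,x_{-i})\big)$. *)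

theory Defs
  imports "HOL-Analysis.Analysis"
begin

text \<open>Player indices are 0..<N; player i has n i variables.
 A point x of R^n is a function x :: nat \<Rightarrow> nat \<Rightarrow> real, where x i j is the
 j-th coordinate of player i; coordinates outside the index range are 0.
 A block x_i of R^{n_i} is a function nat \<Rightarrow> real vanishing for j \<ge> n i.
 The point (y_i, x_{-i}) is x(i := y).\<close>

type_synonym point = "nat \<Rightarrow> nat \<Rightarrow> real"
type_synonym block = "nat \<Rightarrow> real"

definition pts :: "nat \<Rightarrow> (nat \<Rightarrow> nat) \<Rightarrow> point set" where
  "pts N n = {x. \<forall>i j. \<not> (i < N \<and> j < n i) \<longrightarrow> x i j = 0}"

definition blk :: "(nat \<Rightarrow> nat) \<Rightarrow> nat \<Rightarrow> block set" where
  "blk n i = {y. \<forall>j. n i \<le> j \<longrightarrow> y j = 0}"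

inductive polyfun :: "('a \<Rightarrow> real) set \<Rightarrow> ('a \<Rightarrow> real) \<Rightarrow> bool" for V where
  pconst: "polyfun V (\<lambda>_. c)"
| pvar: "v \<in> V \<Longrightarrow> polyfun V v"
| padd: "polyfun V p \<Longrightarrow> polyfun V q \<Longrightarrow> polyfun V (\<lambda>a. p a + q a)"
| pmult: "polyfun V p \<Longrightarrow> polyfun V q \<Longrightarrow> polyfun V (\<lambda>a. p a * q a)"

definition poly_x :: "nat \<Rightarrow> (nat \<Rightarrow> nat) \<Rightarrow> (point \<Rightarrow> real) \<Rightarrow> bool" where
  "poly_x N n p = polyfun {(\<lambda>x. x i j) | i j. i < N \<and> j < n i} p"

definition poly_xy :: "nat \<Rightarrow> (nat \<Rightarrow> nat) \<Rightarrow> nat \<Rightarrow> (point \<times> block \<Rightarrow> real) \<Rightarrow> bool" where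
  "poly_xy N n i p = polyfun ({(\<lambda>(x, y). x k j) | k j. k < N \<and> j < n k}
                              \<union> {(\<lambda>(x, y). y j) | j. j < n i}) p"

text \<open>Feasible set X_i(x_{-i}) = {x_i : g_i(x_i, x_{-i}) \<ge> 0}, g_i having m i components.\<close>
definition feas :: "(nat \<Rightarrow> nat) \<Rightarrow> (nat \<Rightarrow> nat) \<Rightarrow> (nat \<Rightarrow> nat \<Rightarrow> point \<Rightarrow> real)
                     \<Rightarrow> nat \<Rightarrow> point \<Rightarrow> block set" where
  "feas n m g i x = {y \<in> blk n i. \<forall>k < m i. g i k (x(i := y)) \<ge> 0}"

definition forcing :: "(real \<Rightarrow> real) \<Rightarrow> bool" where
  "forcing \<sigma> \<longleftrightarrow> (\<forall>t. t \<ge> 0 \<longrightarrow> \<sigma> t \<ge> 0) \<and>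
     (\<forall>t :: nat \<Rightarrow> real. (\<forall>k. t k \<ge> 0) \<longrightarrow> (\<lambda>k. \<sigma> (t k)) \<longlonglongrightarrow> 0 \<longrightarrow> t \<longlonglongrightarrow> 0)"

definition gen_potential_game ::
  "nat \<Rightarrow> (nat \<Rightarrow> nat) \<Rightarrow> (nat \<Rightarrow> nat) \<Rightarrow> (nat \<Rightarrow> point \<Rightarrow> real)
     \<Rightarrow> (nat \<Rightarrow> nat \<Rightarrow> point \<Rightarrow> real) \<Rightarrow> bool" where
  "gen_potential_game N n m f g \<longleftrightarrow>
     (\<exists>X D. X \<noteq> {} \<and> X \<subseteq> pts N n \<and> closed X \<and>
        (\<forall>i < N. D i \<subseteq> blk n i \<and> closed (D i)) \<and>
        (\<exists>x \<in> X. \<forall>i < N. x i \<in> D i) \<and>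
        (\<forall>i < N. \<forall>x \<in> pts N n. feas n m g i x = {y \<in> D i. x(i := y) \<in> X}))
   \<and> (\<exists>P \<sigma>. continuous_on (pts N n) P \<and> forcing \<sigma> \<and>
        (\<forall>i < N. \<forall>x \<in> pts N n. \<forall>y \<in> feas n m g i x. \<forall>z \<in> feas n m g i x.
           f i (x(i := y)) - f i (x(i := z)) > 0 \<longrightarrow>
           P (x(i := y)) - P (x(i := z)) \<ge> \<sigma> (f i (x(i := y)) - f i (x(i := z)))))"

end

theory Submission
  imports Defs
begin

text \<open>The identity serves as forcing function. Where \<open>\<triangle>f\<^sub>i > 0\<close>, the identity
  \<open>\<triangle>P\<^sub>i = (p\<^sub>i\<^sub>0 + 1) \<triangle>f\<^sub>i + p\<^sub>i\<^sub>1\<close> with nonnegative multipliers gives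
  \<open>\<triangle>P\<^sub>i \<ge> \<triangle>f\<^sub>i\<close>. Two feasible responses \<open>y\<^sub>i, z\<^sub>i\<close> are compared by applying
  the identity at the base point \<open>(z\<^sub>i, x\<^sub>-\<^sub>i)\<close>, which lies in \<open>K\<^sub>i\<close> together with
  \<open>y\<^sub>i\<close>. Polynomiality is only needed for the continuity of \<open>P\<close>; the closed-set
  description of the feasible sets is itself a hypothesis.\<close>

lemma continuous_on_polyfun:
  assumes "polyfun V p" and "\<forall>v\<in>V. continuous_on S v"
  shows "continuous_on S p"
  using assms by (induction rule: polyfun.induct) (simp_all add: continuous_on_add continuous_on_mult)

lemma continuous_on_point_coordinate: "continuous_on S (\<lambda>x::point. x i j)"
proof -
  have "continuous_on UNIV (\<lambda>x::point. x i j)"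
    using continuous_on_compose2[OF continuous_on_product_coordinates[of j]
        continuous_on_product_coordinates[of i]]
    by simp
  then show ?thesis using continuous_on_subset by blast
qed

lemma continuous_on_poly_x:
  assumes "poly_x N n p"
  shows "continuous_on S p"
  using assms unfolding poly_x_def
  by (rule continuous_on_polyfun) (auto intro: continuous_on_point_coordinate)

lemma forcing_id: "forcing (\<lambda>t. t)"
  unfolding forcing_def by auto

lemma feas_fun_upd_same [simp]: "feas n m g i (x(i := z)) = feas n m g i x"
  unfolding feas_def by simp

lemma fun_upd_in_pts:
  assumes "x \<in> pts N n" and "z \<in> blk n i" and "i < N"
  shows "x(i := z) \<in> pts N n"
  using assms unfolding pts_def blk_def by auto

lemma increment_ge_of_multiplier_identity:
  fixes dP df p0 p1 :: real
  assumes "dP = (p0 + 1) * df + p1" and "p0 \<ge> 0" and "p1 \<ge> 0" and "df > 0"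
  shows "dP \<ge> df"
proof -
  have "p0 * df \<ge> 0" using assms by simp
  then show ?thesis using assms by (simp add: algebra_simps)
qed

lemma potential_increment_ge_cost_increment:
  fixes f :: "nat \<Rightarrow> point \<Rightarrow> real" and P :: "point \<Rightarrow> real"
    and p0 p1 :: "nat \<Rightarrow> point \<times> block \<Rightarrow> real"
  assumes p_nonneg: "\<forall>i < N. \<forall>x \<in> pts N n. \<forall>y \<in> blk n i.
        (x i \<in> feas n m g i x \<and> y \<in> feas n m g i x \<and> f i (x(i := y)) - f i x \<ge> 0)
        \<longrightarrow> p0 i (x, y) \<ge> 0 \<and> p1 i (x, y) \<ge> 0"
    and ident: "\<forall>i < N. \<forall>x \<in> pts N n. \<forall>y \<in> blk n i.
        P (x(i := y)) - P x = (p0 i (x, y) + 1) * (f i (x(i := y)) - f i x) + p1 i (x, y)"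
  shows "\<forall>i < N. \<forall>x \<in> pts N n. \<forall>y \<in> feas n m g i x. \<forall>z \<in> feas n m g i x.
      f i (x(i := y)) - f i (x(i := z)) > 0 \<longrightarrow>
      P (x(i := y)) - P (x(i := z)) \<ge> f i (x(i := y)) - f i (x(i := z))"
proof (intro allI impI ballI)
  fix i x y z
  assume i: "i < N" and x: "x \<in> pts N n" and y: "y \<in> feas n m g i x"
    and z: "z \<in> feas n m g i x" and increase: "f i (x(i := y)) - f i (x(i := z)) > 0"
  let ?x = "x(i := z)"
  have y_blk: "y \<in> blk n i" and z_blk: "z \<in> blk n i"
    using y z unfolding feas_def by auto
  have x_pts: "?x \<in> pts N n" using fun_upd_in_pts[OF x z_blk i] .
  have identity: "P (x(i := y)) - P ?x
      = (p0 i (?x, y) + 1) * (f i (x(i := y)) - f i ?x) + p1 i (?x, y)"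
    using ident[rule_format, OF i x_pts y_blk] by (simp only: fun_upd_upd)
  have "?x i \<in> feas n m g i ?x \<and> y \<in> feas n m g i ?x \<and> f i (?x(i := y)) - f i ?x \<ge> 0"
    using y z increase by simp
  then have "p0 i (?x, y) \<ge> 0 \<and> p1 i (?x, y) \<ge> 0"
    using p_nonneg[rule_format, OF i x_pts y_blk] by blast
  then show "P (x(i := y)) - P ?x \<ge> f i (x(i := y)) - f i ?x"
    by (elim conjE) (rule increment_ge_of_multiplier_identity[OF identity _ _ increase])
qed

theorem lemma4p5:
  fixes N :: nat and n m :: "nat \<Rightarrow> nat"
    and f :: "nat \<Rightarrow> point \<Rightarrow> real" and g :: "nat \<Rightarrow> nat \<Rightarrow> point \<Rightarrow> real"
    and X :: "point set" and D :: "nat \<Rightarrow> block set"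
    and P :: "point \<Rightarrow> real" and p0 p1 :: "nat \<Rightarrow> point \<times> block \<Rightarrow> real"
  assumes f_poly: "\<forall>i < N. poly_x N n (f i)"
    and g_poly: "\<forall>i < N. \<forall>k < m i. poly_x N n (g i k)"
    and X_ne: "X \<noteq> {}" and X_sub: "X \<subseteq> pts N n" and X_closed: "closed X"
    and D_sub: "\<forall>i < N. D i \<subseteq> blk n i" and D_closed: "\<forall>i < N. closed (D i)"
    and DX_ne: "\<exists>x \<in> X. \<forall>i < N. x i \<in> D i"
    and feas_eq: "\<forall>i < N. \<forall>x \<in> pts N n. feas n m g i x = {y \<in> D i. x(i := y) \<in> X}"
    and P_poly: "poly_x N n P"
    and p0_poly: "\<forall>i < N. poly_xy N n i (p0 i)"
    and p1_poly: "\<forall>i < N. poly_xy N n i (p1 i)"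
    and p_nonneg: "\<forall>i < N. \<forall>x \<in> pts N n. \<forall>y \<in> blk n i.
        (x i \<in> feas n m g i x \<and> y \<in> feas n m g i x \<and> f i (x(i := y)) - f i x \<ge> 0)
        \<longrightarrow> p0 i (x, y) \<ge> 0 \<and> p1 i (x, y) \<ge> 0"
    and ident: "\<forall>i < N. \<forall>x \<in> pts N n. \<forall>y \<in> blk n i.
        P (x(i := y)) - P x = (p0 i (x, y) + 1) * (f i (x(i := y)) - f i x) + p1 i (x, y)"
  shows "gen_potential_game N n m f g"
proof -
  note P_cont = continuous_on_poly_x[OF P_poly, of "pts N n"]
  note potential_ineq = potential_increment_ge_cost_increment[OF p_nonneg ident]
  show ?thesis
    unfolding gen_potential_game_def
    by (intro conjI exI[of _ X] exI[of _ D] exI[of _ P] exI[of _ "\<lambda>t. t"])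
      (use X_ne X_sub X_closed D_sub D_closed DX_ne feas_eq P_cont forcing_id potential_ineq
        in blast)+
qed

end
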